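(* Let $g\ge2$ and $\Sigma_g=\{(z,w)\in(\mathbb{C}\cup\{\infty\})^2: w^{g+1}=z^g(z+1)(z-1)\}$. Let $\eta_1=\frac{dz}{w(z-1)}$, $\eta_2=\frac{w\,dz}{(z+1)(z-1)}$, $\eta_3=\frac{dz}{w(z+1)}$, and for $a_0,a_1,b_0,b_1\in\mathbb{C}$ and nonzero $\alpha,\beta,\gamma\in\mathbb{C}$ set $$\phi_1=\Big(a_0+a_1\big(\tfrac zw\big)^{g-1}\Big)\tfrac{dz}{w}+\alpha\eta_1+\beta\eta_2,\quad \phi_2=\Big(ia_0-ia_1\big(\tfrac zw\big)^{g-1}\Big)\tfrac{dz}{w}+i\alpha\eta_1-i\beta\eta_2,$$ $$\phi_3=\Big(b_0+b_1\big(\tfrac zw\big)^{g-1}\Big)\tfrac{dz}{w}+\beta\eta_2+\gamma\eta_3,\quad \phi_4=\Big(-ib_0+ib_1\big(\tfrac zw\big)^{g-1}\Big)\tfrac{dz}{w}+i\beta\eta_2-i\gamma\eta_3.$$ Then $\sum_{j=1}^4\phi_j^2\equiv0$ if and only if $a_0=-b_0=\frac{\alpha+\gamma}{2}$ and $a_1=-b_1=-\beta$.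
   Context: $\Sigma_g$ denotes the compact Riemann surface (of genus $g$) defined by the given equation, with a single point at $z=\infty$. *)

theory Defs
  imports Complex_Main
begin

text \<open>Every meromorphic 1-form below is
written as (coefficient function) * dz; the coefficient is evaluated at points
(z,w) of the affine part of the curve with w \<noteq> 0 (this is a dense open subset
of the compact surface, on which all forms are holomorphic; there z \<noteq> 0, \<plusminus>1).\<close>

definition on_curve :: "nat \<Rightarrow> complex \<Rightarrow> complex \<Rightarrow> bool" where
  "on_curve g z w \<longleftrightarrow> w ^ (g + 1) = z ^ g * (z + 1) * (z - 1)"

definition eta1 :: "complex \<Rightarrow> complex \<Rightarrow> complex" where
  "eta1 z w = 1 / (w * (z - 1))"
definition eta2 :: "complex \<Rightarrow> complex \<Rightarrow> complex" where
  "eta2 z w = w / ((z + 1) * (z - 1))"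
definition eta3 :: "complex \<Rightarrow> complex \<Rightarrow> complex" where
  "eta3 z w = 1 / (w * (z + 1))"

definition phi1 :: "nat \<Rightarrow> complex \<Rightarrow> complex \<Rightarrow> complex \<Rightarrow> complex \<Rightarrow> complex \<Rightarrow> complex \<Rightarrow> complex" where
  "phi1 g a0 a1 \<alpha> \<beta> z w =
     (a0 + a1 * (z / w) ^ (g - 1)) * (1 / w) + \<alpha> * eta1 z w + \<beta> * eta2 z w"
definition phi2 :: "nat \<Rightarrow> complex \<Rightarrow> complex \<Rightarrow> complex \<Rightarrow> complex \<Rightarrow> complex \<Rightarrow> complex \<Rightarrow> complex" where
  "phi2 g a0 a1 \<alpha> \<beta> z w =
     (\<i> * a0 - \<i> * a1 * (z / w) ^ (g - 1)) * (1 / w) + \<i> * \<alpha> * eta1 z w - \<i> * \<beta> * eta2 z w"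
definition phi3 :: "nat \<Rightarrow> complex \<Rightarrow> complex \<Rightarrow> complex \<Rightarrow> complex \<Rightarrow> complex \<Rightarrow> complex \<Rightarrow> complex" where
  "phi3 g b0 b1 \<beta> \<gamma> z w =
     (b0 + b1 * (z / w) ^ (g - 1)) * (1 / w) + \<beta> * eta2 z w + \<gamma> * eta3 z w"
definition phi4 :: "nat \<Rightarrow> complex \<Rightarrow> complex \<Rightarrow> complex \<Rightarrow> complex \<Rightarrow> complex \<Rightarrow> complex \<Rightarrow> complex" where
  "phi4 g b0 b1 \<beta> \<gamma> z w =
     (- \<i> * b0 + \<i> * b1 * (z / w) ^ (g - 1)) * (1 / w) + \<i> * \<beta> * eta2 z w - \<i> * \<gamma> * eta3 z w"

end

theory Submission
  imports Defs "HOL-Computational_Algebra.Polynomial"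
begin

text \<open>On the curve, (z/w)^(g-1) = w^2 / (z (z^2 - 1)), so the only non-rational
factor in the \<open>\<phi>\<^sub>j\<close> disappears from \<open>\<Sum> \<phi>\<^sub>j\<^sup>2\<close>: writing \<open>\<phi>\<^sub>1 = A + B\<close>,
\<open>\<phi>\<^sub>2 = i(A - B)\<close>, \<open>\<phi>\<^sub>3 = C + D\<close>, \<open>\<phi>\<^sub>4 = i(D - C)\<close> gives \<open>\<Sum> \<phi>\<^sub>j\<^sup>2 = 4(AB + CD)\<close>, and
\<open>AB + CD\<close> is a cubic polynomial in z divided by \<open>z (z - 1)\<^sup>2 (z + 1)\<^sup>2\<close>. Since every
z \<noteq> 0, \<plusminus>1 lies under some point of the curve, the sum vanishes identically iff
this cubic is the zero polynomial, and its values at z = 1, -1, 0, 2 give the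
four linear conditions on the coefficients.\<close>

definition conformality_poly ::
    "complex \<Rightarrow> complex \<Rightarrow> complex \<Rightarrow> complex \<Rightarrow> complex \<Rightarrow> complex \<Rightarrow> complex \<Rightarrow> complex poly" where
  "conformality_poly a0 a1 b0 b1 \<alpha> \<beta> \<gamma> =
     [:\<alpha> - a0, a0:] * [:a1, \<beta>:] * [:1, 1:] + [:\<gamma> + b0, b0:] * [:b1, \<beta>:] * [:-1, 1:]"

lemma poly_conformality_poly:
  "poly (conformality_poly a0 a1 b0 b1 \<alpha> \<beta> \<gamma>) z =
     (a0 * (z - 1) + \<alpha>) * (a1 + \<beta> * z) * (z + 1) + (b0 * (z + 1) + \<gamma>) * (b1 + \<beta> * z) * (z - 1)"
  by (simp add: conformality_poly_def algebra_simps)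

lemma poly_eq_0_if_roots_cofinite:
  fixes p :: "'a::{idom, ring_char_0} poly"
  assumes "finite S" and "\<And>x. x \<notin> S \<Longrightarrow> poly p x = 0"
  shows "p = 0"
proof (rule ccontr)
  assume "p \<noteq> 0"
  then have "finite (S \<union> {x. poly p x = 0})"
    using assms(1) poly_roots_finite by blast
  moreover have "S \<union> {x. poly p x = 0} = UNIV"
    using assms(2) by blast
  ultimately show False
    using infinite_UNIV_char_0 by metis
qed

lemma conformality_poly_eq_0_iff:
  assumes "\<alpha> \<noteq> 0" and "\<beta> \<noteq> 0" and "\<gamma> \<noteq> 0"
  shows "conformality_poly a0 a1 b0 b1 \<alpha> \<beta> \<gamma> = 0
     \<longleftrightarrow> a0 = (\<alpha> + \<gamma>) / 2 \<and> b0 = - a0 \<and> a1 = - \<beta> \<and> b1 = - a1"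
proof
  let ?p = "poly (conformality_poly a0 a1 b0 b1 \<alpha> \<beta> \<gamma>)"
  assume "conformality_poly a0 a1 b0 b1 \<alpha> \<beta> \<gamma> = 0"
  then have "?p 1 = 0" "?p (-1) = 0" "?p 0 = 0" "?p 2 = 0"
    by simp_all
  then have "2 * \<alpha> * (a1 + \<beta>) = 0" "- 2 * \<gamma> * (b1 - \<beta>) = 0"
    and p0: "(\<alpha> - a0) * a1 - (b0 + \<gamma>) * b1 = 0"
    and p2: "3 * (a0 + \<alpha>) * (a1 + 2 * \<beta>) + (3 * b0 + \<gamma>) * (b1 + 2 * \<beta>) = 0"
    unfolding poly_conformality_poly by (simp_all (no_asm_use) add: algebra_simps)
  with assms have a1: "a1 = - \<beta>" and b1: "b1 = \<beta>"
    by (simp_all add: eq_neg_iff_add_eq_0)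
  from p0 p2 have "\<beta> * (a0 - b0 - \<alpha> - \<gamma>) = 0" and "3 * \<beta> * (a0 + 3 * b0 + \<alpha> + \<gamma>) = 0"
    unfolding a1 b1 by (simp_all (no_asm_use) add: algebra_simps)
  with assms(2) have u: "a0 - b0 - \<alpha> - \<gamma> = 0" and v: "a0 + 3 * b0 + \<alpha> + \<gamma> = 0"
    by simp_all
  have "b0 = ((a0 + 3 * b0 + \<alpha> + \<gamma>) - (a0 - b0 - \<alpha> - \<gamma>) - 2 * (\<alpha> + \<gamma>)) / 4"
    by (simp add: field_simps)
  also have "\<dots> = - (\<alpha> + \<gamma>) / 2"
    unfolding u v by simp
  finally have b0: "b0 = - (\<alpha> + \<gamma>) / 2" .
  have "a0 = (a0 - b0 - \<alpha> - \<gamma>) + b0 + \<alpha> + \<gamma>"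
    by simp
  also have "\<dots> = (\<alpha> + \<gamma>) / 2"
    unfolding u by (simp add: b0 field_simps)
  finally have a0: "a0 = (\<alpha> + \<gamma>) / 2" .
  show "a0 = (\<alpha> + \<gamma>) / 2 \<and> b0 = - a0 \<and> a1 = - \<beta> \<and> b1 = - a1"
    using a0 b0 a1 b1 by (metis minus_divide_left minus_minus)
next
  assume "a0 = (\<alpha> + \<gamma>) / 2 \<and> b0 = - a0 \<and> a1 = - \<beta> \<and> b1 = - a1"
  then have "poly (conformality_poly a0 a1 b0 b1 \<alpha> \<beta> \<gamma>) z = 0" for z
    by clarify (simp add: poly_conformality_poly field_simps)
  then show "conformality_poly a0 a1 b0 b1 \<alpha> \<beta> \<gamma> = 0"
    by (intro poly_eq_0_if_roots_cofinite[of "{}"]) auto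
qed

lemma on_curve_nonzero:
  assumes "on_curve g z w" and "w \<noteq> 0" and "g \<ge> 1"
  shows "z \<noteq> 0" and "z - 1 \<noteq> 0" and "z + 1 \<noteq> 0"
proof -
  have "z ^ g * (z + 1) * (z - 1) \<noteq> 0"
    using assms(1,2) unfolding on_curve_def by (metis power_not_zero)
  with assms(3) show "z \<noteq> 0" "z - 1 \<noteq> 0" "z + 1 \<noteq> 0"
    by auto
qed

lemma on_curve_power_eq:
  assumes "on_curve g z w" and "w \<noteq> 0" and "g \<ge> 1"
  shows "(z / w) ^ (g - 1) = w\<^sup>2 / (z * (z - 1) * (z + 1))"
proof -
  obtain k where g: "g = Suc k"
    using assms(3) by (cases g) auto
  have "w ^ k * w\<^sup>2 = z ^ k * (z * (z - 1) * (z + 1))"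
    using assms(1) unfolding on_curve_def g by (simp add: power2_eq_square algebra_simps)
  then show ?thesis
    using on_curve_nonzero[OF assms] assms(2)
    by (simp add: g power_divide divide_simps mult.commute)
qed

lemma on_curve_exists:
  assumes "z \<noteq> 0" and "z - 1 \<noteq> 0" and "z + 1 \<noteq> 0"
  shows "\<exists>w. on_curve g z w \<and> w \<noteq> 0"
proof -
  let ?c = "z ^ g * (z + 1) * (z - 1)"
  have "?c \<noteq> 0"
    using assms by simp
  then have "card {w. w ^ (g + 1) = ?c} = g + 1"
    by (intro card_nth_roots) simp_all
  then obtain w where "w ^ (g + 1) = ?c"
    by (metis (mono_tags) add_eq_0_iff_both_eq_0 card.empty empty_Collect_eq one_neq_zero)
  with \<open>?c \<noteq> 0\<close> show ?thesis
    unfolding on_curve_def by auto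
qed

lemma sum_squares_rotated_pairs:
  fixes A B C D :: complex
  shows "(A + B)\<^sup>2 + (\<i> * (A - B))\<^sup>2 + (C + D)\<^sup>2 + (\<i> * (D - C))\<^sup>2 = 4 * (A * B + C * D)"
  by (simp add: power2_eq_square algebra_simps)

lemma phi_sum_squares_eq:
  assumes "on_curve g z w" and "w \<noteq> 0" and "g \<ge> 1"
  shows "(phi1 g a0 a1 \<alpha> \<beta> z w)\<^sup>2 + (phi2 g a0 a1 \<alpha> \<beta> z w)\<^sup>2
          + (phi3 g b0 b1 \<beta> \<gamma> z w)\<^sup>2 + (phi4 g b0 b1 \<beta> \<gamma> z w)\<^sup>2
       = 4 * poly (conformality_poly a0 a1 b0 b1 \<alpha> \<beta> \<gamma>) z / (z * (z - 1)\<^sup>2 * (z + 1)\<^sup>2)"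
proof -
  note nonzero = on_curve_nonzero[OF assms] assms(2)
  define t where "t = (z / w) ^ (g - 1)"
  define A where "A = (a0 * (z - 1) + \<alpha>) / (w * (z - 1))"
  define B where "B = w * (a1 + \<beta> * z) / (z * (z - 1) * (z + 1))"
  define C where "C = (b0 * (z + 1) + \<gamma>) / (w * (z + 1))"
  define D where "D = w * (b1 + \<beta> * z) / (z * (z - 1) * (z + 1))"
  have t: "t = w\<^sup>2 / (z * (z - 1) * (z + 1))"
    unfolding t_def by (rule on_curve_power_eq[OF assms])
  have A: "A = a0 / w + \<alpha> * eta1 z w" and B: "B = a1 * t / w + \<beta> * eta2 z w"
    and C: "C = b0 / w + \<gamma> * eta3 z w" and D: "D = b1 * t / w + \<beta> * eta2 z w"
    unfolding A_def B_def C_def D_def eta1_def eta2_def eta3_def t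
    using nonzero by (simp_all add: divide_simps power2_eq_square) (simp_all add: algebra_simps)
  have "phi1 g a0 a1 \<alpha> \<beta> z w = A + B" and "phi2 g a0 a1 \<alpha> \<beta> z w = \<i> * (A - B)"
    and "phi3 g b0 b1 \<beta> \<gamma> z w = C + D" and "phi4 g b0 b1 \<beta> \<gamma> z w = \<i> * (D - C)"
    unfolding phi1_def phi2_def phi3_def phi4_def A B C D t_def
    by (simp_all add: algebra_simps)
  moreover have "A * B + C * D =
      poly (conformality_poly a0 a1 b0 b1 \<alpha> \<beta> \<gamma>) z / (z * (z - 1)\<^sup>2 * (z + 1)\<^sup>2)"
    unfolding A_def B_def C_def D_def poly_conformality_poly
    using nonzero by (simp add: divide_simps power2_eq_square)
  ultimately show ?thesis
    using sum_squares_rotated_pairs[of A B C D] by simp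
qed

lemma phi_sum_squares_vanish_iff:
  assumes "g \<ge> 1"
  shows "(\<forall>z w. on_curve g z w \<and> w \<noteq> 0 \<longrightarrow>
            (phi1 g a0 a1 \<alpha> \<beta> z w)\<^sup>2 + (phi2 g a0 a1 \<alpha> \<beta> z w)\<^sup>2
          + (phi3 g b0 b1 \<beta> \<gamma> z w)\<^sup>2 + (phi4 g b0 b1 \<beta> \<gamma> z w)\<^sup>2 = 0)
     \<longleftrightarrow> conformality_poly a0 a1 b0 b1 \<alpha> \<beta> \<gamma> = 0"
proof
  let ?p = "conformality_poly a0 a1 b0 b1 \<alpha> \<beta> \<gamma>"
  assume vanish: "\<forall>z w. on_curve g z w \<and> w \<noteq> 0 \<longrightarrow>
            (phi1 g a0 a1 \<alpha> \<beta> z w)\<^sup>2 + (phi2 g a0 a1 \<alpha> \<beta> z w)\<^sup>2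
          + (phi3 g b0 b1 \<beta> \<gamma> z w)\<^sup>2 + (phi4 g b0 b1 \<beta> \<gamma> z w)\<^sup>2 = 0"
  have "poly ?p z = 0" if "z \<notin> {0, 1, -1}" for z
  proof -
    from that have "z \<noteq> 0" "z - 1 \<noteq> 0" "z + 1 \<noteq> 0"
      by (auto simp: add_eq_0_iff minus_equation_iff[of z])
    moreover obtain w where w: "on_curve g z w" "w \<noteq> 0"
      using on_curve_exists[OF calculation] by blast
    ultimately have "z * (z - 1)\<^sup>2 * (z + 1)\<^sup>2 \<noteq> 0"
      by simp
    moreover have "4 * poly ?p z / (z * (z - 1)\<^sup>2 * (z + 1)\<^sup>2) = 0"
      using vanish w phi_sum_squares_eq[OF w assms, of a0 a1 \<alpha> \<beta> b0 b1 \<gamma>] by metis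
    ultimately show ?thesis
      by simp
  qed
  then show "?p = 0"
    by (intro poly_eq_0_if_roots_cofinite[of "{0, 1, -1}"]) auto
next
  assume "conformality_poly a0 a1 b0 b1 \<alpha> \<beta> \<gamma> = 0"
  then show "\<forall>z w. on_curve g z w \<and> w \<noteq> 0 \<longrightarrow>
            (phi1 g a0 a1 \<alpha> \<beta> z w)\<^sup>2 + (phi2 g a0 a1 \<alpha> \<beta> z w)\<^sup>2
          + (phi3 g b0 b1 \<beta> \<gamma> z w)\<^sup>2 + (phi4 g b0 b1 \<beta> \<gamma> z w)\<^sup>2 = 0"
    by (simp add: phi_sum_squares_eq[OF _ _ assms])
qed

theorem lemma7p11:
  fixes g :: nat and a0 a1 b0 b1 \<alpha> \<beta> \<gamma> :: complex
  assumes "g \<ge> 2" and "\<alpha> \<noteq> 0" and "\<beta> \<noteq> 0" and "\<gamma> \<noteq> 0"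
  shows "(\<forall>z w. on_curve g z w \<and> w \<noteq> 0 \<longrightarrow>
            (phi1 g a0 a1 \<alpha> \<beta> z w)\<^sup>2 + (phi2 g a0 a1 \<alpha> \<beta> z w)\<^sup>2
          + (phi3 g b0 b1 \<beta> \<gamma> z w)\<^sup>2 + (phi4 g b0 b1 \<beta> \<gamma> z w)\<^sup>2 = 0)
     \<longleftrightarrow> (a0 = (\<alpha> + \<gamma>) / 2 \<and> b0 = - a0 \<and> a1 = - \<beta> \<and> b1 = - a1)"
proof -
  have "g \<ge> 1"
    using assms(1) by simp
  then show ?thesis
    by (rule trans[OF phi_sum_squares_vanish_iff conformality_poly_eq_0_iff[OF assms(2-4)]])
qed

end
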